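(* Let $r,q$ be positive integers, $k\ge1$ and $p_1,\dots,p_k\ge1$ integers. For an integer vector $y=\langle s_1;a_{11},\dots,a_{1p_1}:\cdots:s_k;a_{k1},\dots,a_{kp_k}\,|\,\nu\rangle\in\mathbb{Z}^{k+1+\sum_i p_i}$ (entries $s_i,a_{ij},\nu$ arbitrary integers, possibly negative) and an integer $n$, define $$h(n,y)=\left\lceil\frac{rn}{q}\right\rceil-\sum_{i=1}^k\left\lceil\frac{r\left(n-s_i-\sum_{j=1}^{p_i}\left\lceil\frac{r(n-a_{ij})}{q}\right\rceil\right)}{q}\right\rceil-\nu.$$ Let $\sim$ be the equivalence relation on such vectors generated by the moves: (i) for some fixed $i,j$ and some $d\in\mathbb{Z}$, replace $s_i$ by $s_i+dr$ and $a_{ij}$ by $a_{ij}+dq$ (all other entries unchanged); (ii) for some fixed $i$ and some $c\in\mathbb{Z}$, replace $s_i$ by $s_i+cq$ and $\nu$ by $\nu+cr$ (all other entries unchanged). If $y\sim y'$, then $h(n,y)=h(n,y')$ for every integer $n$. *)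

theory Defs
  imports Complex_Main
begin

text \<open>A vector y = <s_1; a_11..a_1p1 : ... : s_k; a_k1..a_kpk | nu> is represented as a
triple (ss, as, nu) with ss = [s_1,...,s_k], as = [[a_11,...,a_1p1],...,[a_k1,...,a_kpk]].\<close>

type_synonym vec = "int list \<times> int list list \<times> int"

definition wf_vec :: "vec \<Rightarrow> bool" where
  "wf_vec y = (case y of (ss, as, \<nu>) \<Rightarrow>
     length ss \<ge> 1 \<and> length as = length ss \<and> (\<forall>i < length as. length (as ! i) \<ge> 1))"

definition hfun :: "int \<Rightarrow> int \<Rightarrow> int \<Rightarrow> vec \<Rightarrow> int" where
  "hfun r q n y = (case y of (ss, as, \<nu>) \<Rightarrow>
     \<lceil>real_of_int (r * n) / real_of_int q\<rceil>
     - (\<Sum>i<length ss. \<lceil>real_of_int (r * (n - ss ! i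
          - (\<Sum>j<length (as ! i). \<lceil>real_of_int (r * (n - as ! i ! j)) / real_of_int q\<rceil>)))
          / real_of_int q\<rceil>)
     - \<nu>)"

definition move :: "int \<Rightarrow> int \<Rightarrow> vec \<Rightarrow> vec \<Rightarrow> bool" where
  "move r q y y' = (case y of (ss, as, \<nu>) \<Rightarrow>
     (\<exists>i j d. i < length ss \<and> i < length as \<and> j < length (as ! i) \<and>
        y' = (ss[i := ss ! i + d * r], as[i := (as ! i)[j := as ! i ! j + d * q]], \<nu>))
   \<or> (\<exists>i c. i < length ss \<and> y' = (ss[i := ss ! i + c * q], as, \<nu> + c * r)))"

end

theory Submission
  imports Defs
begin

text \<open>Write \<open>g x = \<lceil>r x / q\<rceil>\<close>. Since \<open>g (x + d q) = g x + d r\<close>, move (i) lowers the inner sum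
  of block \<open>i\<close> by \<open>d r\<close>, which exactly compensates the shift of \<open>s\<^sub>i\<close> by \<open>d r\<close>; move (ii)
  lowers the ceiling of block \<open>i\<close> by \<open>c r\<close>, which is compensated by the shift of \<open>\<nu>\<close>.\<close>

definition ceil_frac :: "int \<Rightarrow> int \<Rightarrow> int \<Rightarrow> int" where
  "ceil_frac r q x = \<lceil>real_of_int (r * x) / real_of_int q\<rceil>"

definition block :: "int \<Rightarrow> int \<Rightarrow> int \<Rightarrow> int \<Rightarrow> int list \<Rightarrow> int" where
  "block r q n s a = ceil_frac r q (n - s - (\<Sum>j<length a. ceil_frac r q (n - a ! j)))"

lemma hfun_eq_blocks:
  "hfun r q n (ss, as, \<nu>) =
     ceil_frac r q n - (\<Sum>i<length ss. block r q n (ss ! i) (as ! i)) - \<nu>"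
  by (simp add: hfun_def block_def ceil_frac_def)

lemma ceil_frac_add_period:
  assumes "q \<noteq> 0"
  shows "ceil_frac r q (x + d * q) = ceil_frac r q x + d * r"
proof -
  have "real_of_int (r * (x + d * q)) / real_of_int q
      = real_of_int (r * x) / real_of_int q + real_of_int (d * r)"
    using assms by (simp add: field_simps)
  then show ?thesis
    unfolding ceil_frac_def by (simp only: ceiling_add_of_int)
qed

lemma sum_lessThan_change_one:
  fixes f g :: "nat \<Rightarrow> 'a :: ab_group_add"
  assumes "j < m" and "\<And>k. k < m \<Longrightarrow> k \<noteq> j \<Longrightarrow> g k = f k"
  shows "(\<Sum>k<m. g k) = (\<Sum>k<m. f k) + (g j - f j)"
proof -
  have "(\<Sum>k<m. g k) = g j + (\<Sum>k\<in>{..<m} - {j}. g k)"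
    using assms(1) by (simp add: sum.remove)
  also have "(\<Sum>k\<in>{..<m} - {j}. g k) = (\<Sum>k\<in>{..<m} - {j}. f k)"
    using assms(2) by (intro sum.cong) auto
  also have "(\<Sum>k\<in>{..<m} - {j}. f k) = (\<Sum>k<m. f k) - f j"
    using assms(1) by (simp add: sum_diff1)
  finally show ?thesis by (simp add: algebra_simps)
qed

lemma block_move_entry:
  assumes "q \<noteq> 0" and "j < length a"
  shows "block r q n (s + d * r) (a[j := a ! j + d * q]) = block r q n s a"
proof -
  have "ceil_frac r q (n - (a ! j + d * q)) = ceil_frac r q (n - a ! j) - d * r"
    using ceil_frac_add_period[OF assms(1), of r "n - a ! j" "- d"] by (simp add: algebra_simps)
  then have "(\<Sum>k<length a. ceil_frac r q (n - a[j := a ! j + d * q] ! k))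
      = (\<Sum>k<length a. ceil_frac r q (n - a ! k)) - d * r"
    using assms(2) by (subst sum_lessThan_change_one[OF assms(2)]) auto
  then show ?thesis
    unfolding block_def by (simp add: algebra_simps)
qed

lemma block_move_head:
  assumes "q \<noteq> 0"
  shows "block r q n (s + c * q) a = block r q n s a - c * r"
  unfolding block_def
  using ceil_frac_add_period[OF assms, of r "n - s - (\<Sum>j<length a. ceil_frac r q (n - a ! j))" "- c"]
  by (simp add: algebra_simps)

lemma hfun_move:
  assumes "q \<noteq> 0" and "move r q y y'"
  shows "hfun r q n y = hfun r q n y'"
proof -
  obtain ss as \<nu> where y: "y = (ss, as, \<nu>)" by (cases y) auto
  consider
      (entry) i j d where "i < length ss" "i < length as" "j < length (as ! i)"
        "y' = (ss[i := ss ! i + d * r], as[i := (as ! i)[j := as ! i ! j + d * q]], \<nu>)"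
    | (head) i c where "i < length ss" "y' = (ss[i := ss ! i + c * q], as, \<nu> + c * r)"
    using assms(2) unfolding y move_def by (simp only: prod.case) blast
  then show ?thesis
  proof cases
    case entry
    have "block r q n (ss[i := ss ! i + d * r] ! k) (as[i := (as ! i)[j := as ! i ! j + d * q]] ! k)
        = block r q n (ss ! k) (as ! k)" for k
      using entry block_move_entry[OF assms(1) entry(3)] by (cases "k = i") auto
    then show ?thesis
      unfolding y entry(4) hfun_eq_blocks by simp
  next
    case head
    have "(\<Sum>k<length ss. block r q n (ss[i := ss ! i + c * q] ! k) (as ! k))
        = (\<Sum>k<length ss. block r q n (ss ! k) (as ! k)) - c * r"
      using head block_move_head[OF assms(1)] by (subst sum_lessThan_change_one[OF head(1)]) auto
    then show ?thesis
      unfolding y head(2) hfun_eq_blocks by simp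
  qed
qed

theorem theorem2:
  fixes r q n :: int and y y' :: vec
  assumes "r > 0" and "q > 0"
    and "wf_vec y" and "wf_vec y'"
    and "equivclp (move r q) y y'"
  shows "hfun r q n y = hfun r q n y'"
  \<comment> \<open>only \<open>q \<noteq> 0\<close> is used\<close>
  using assms(5)
proof (induction rule: equivclp_induct)
  case base
  show ?case by simp
next
  case (step z w)
  from \<open>q > 0\<close> have "q \<noteq> 0" by simp
  with step.hyps(2) have "hfun r q n z = hfun r q n w"
    unfolding symclp_def by (metis hfun_move)
  with step.IH show ?case by simp
qed

end
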